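(* Suppose $\mathbf{U}\in\mathbb{R}^{N\times n}$ is the matrix of the first $n$ left singular vectors of a data matrix $\mathbf{X}\in\mathbb{R}^{N\times n_s}$, and $\boldsymbol{\Sigma}\in\mathbb{R}^{n\times n}$ is the corresponding diagonal matrix of (nonzero) singular values $\{\sigma_j\}_{j=1}^n$. Let $\hat{\mathbf{X}}=\mathbf{U}^\intercal\mathbf{X}\in\mathbb{R}^{n\times n_s}$ and $\hat{\mathbf{X}}_t=\mathbf{U}^\intercal\mathbf{X}_t\in\mathbb{R}^{n\times n_s}$, where $\mathbf{X}_t$ is an approximation (e.g. by finite differences) to the time derivative of the snapshots in $\mathbf{X}$. Then the unique solution to the operator inference problem of size $n$ is given by \[ \hat{\mathbf{D}} = \operatorname*{argmin}_{\mathbf{D}\in\mathbb{R}^{n\times n}}\left\|\hat{\mathbf{X}}_t - \mathbf{D}\hat{\mathbf{X}}\right\|^2 = \hat{\mathbf{X}}_t\hat{\mathbf{X}}^\intercal\boldsymbol{\Sigma}^{-2}.\] Moreover, for any $n'<n$, the submatrix $\hat{\mathbf{D}}'\in\mathbb{R}^{n'\times n'}$ formed by extracting the first $n'$ rows and columns of $\hat{\mathbf{D}}$ is the solution to the corresponding operator inference problem of size $n'$ (i.e. the same problem with $\mathbf{U}$ replaced by its first $n'$ columns).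
   Context: Operator inference (OpInf) learns a reduced linear operator $\hat{\mathbf{D}}$ for a reduced model $\dot{\hat{\mathbf{x}}}=\hat{\mathbf{D}}\hat{\mathbf{x}}$ from projected snapshot data by least squares; the norm is the Frobenius norm. *)

theory Defs
  imports "Jordan_Normal_Form.Matrix"
begin

definition fro_sq :: "real mat \<Rightarrow> real" where
  "fro_sq A = (\<Sum>i<dim_row A. \<Sum>j<dim_col A. (A $$ (i,j))^2)"

definition is_svd :: "real mat \<Rightarrow> real mat \<Rightarrow> real mat \<Rightarrow> real mat \<Rightarrow> bool" where
  "is_svd X W S V \<longleftrightarrow>
     W \<in> carrier_mat (dim_row X) (dim_row X) \<and>
     V \<in> carrier_mat (dim_col X) (dim_col X) \<and>
     S \<in> carrier_mat (dim_row X) (dim_col X) \<and>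
     transpose_mat W * W = 1\<^sub>m (dim_row X) \<and>
     transpose_mat V * V = 1\<^sub>m (dim_col X) \<and>
     (\<forall>i<dim_row X. \<forall>j<dim_col X. i \<noteq> j \<longrightarrow> S $$ (i,j) = 0) \<and>
     (\<forall>i<min (dim_row X) (dim_col X). S $$ (i,i) \<ge> 0) \<and>
     (\<forall>i j. i \<le> j \<longrightarrow> j < min (dim_row X) (dim_col X) \<longrightarrow> S $$ (j,j) \<le> S $$ (i,i)) \<and>
     X = W * S * transpose_mat V"

definition first_cols :: "nat \<Rightarrow> real mat \<Rightarrow> real mat" where
  "first_cols k A = mat (dim_row A) k (\<lambda>(i,j). A $$ (i,j))"

definition lead_block :: "nat \<Rightarrow> real mat \<Rightarrow> real mat" where
  "lead_block k A = mat k k (\<lambda>(i,j). A $$ (i,j))"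

definition opinf_min :: "real mat \<Rightarrow> real mat \<Rightarrow> real mat \<Rightarrow> real mat \<Rightarrow> bool" where
  "opinf_min U X Xt D \<longleftrightarrow>
     D \<in> carrier_mat (dim_col U) (dim_col U) \<and>
     (\<forall>D' \<in> carrier_mat (dim_col U) (dim_col U).
        fro_sq (transpose_mat U * Xt - D * (transpose_mat U * X))
        \<le> fro_sq (transpose_mat U * Xt - D' * (transpose_mat U * X)))"

end

theory Submission
  imports Defs "Jordan_Normal_Form.Determinant"
begin

text \<open>With \<open>A = U\<^sup>T X\<close> and \<open>B = U\<^sup>T X\<^sub>t\<close> the objective is \<open>\<parallel>B - D A\<parallel>\<^sup>2\<close>. When \<open>A A\<^sup>T\<close> is
  invertible, \<open>D\<^sub>0 = B A\<^sup>T (A A\<^sup>T)\<^sup>-\<^sup>1\<close> satisfies the normal equations \<open>(B - D\<^sub>0 A) A\<^sup>T = 0\<close>,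
  so \<open>\<parallel>B - D A\<parallel>\<^sup>2 = \<parallel>B - D\<^sub>0 A\<parallel>\<^sup>2 + \<parallel>(D - D\<^sub>0) A\<parallel>\<^sup>2\<close> and \<open>D\<^sub>0\<close> is the unique minimiser.
  For the leading left singular vectors, \<open>W\<^sup>T X = S V\<^sup>T\<close> gives \<open>A A\<^sup>T = \<Sigma>\<^sup>2\<close>. Finally, entry
  \<open>(i, j)\<close> of the minimiser is \<open>(W\<^sup>T X\<^sub>t (W\<^sup>T X)\<^sup>T)\<^sub>i\<^sub>j / \<sigma>\<^sub>j\<^sup>2\<close>, which does not depend on the
  number of basis vectors used; this is the truncation property.\<close>

lemma fro_sq_nonneg: "fro_sq M \<ge> 0"
  unfolding fro_sq_def by (intro sum_nonneg) auto

lemma fro_sq_eq_0_iff: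
  assumes "M \<in> carrier_mat r c"
  shows "fro_sq M = 0 \<longleftrightarrow> M = 0\<^sub>m r c"
proof
  assume "fro_sq M = 0"
  then have "\<forall>i<r. \<forall>j<c. (M $$ (i,j))^2 = 0"
    using assms unfolding fro_sq_def
    by (simp add: sum_nonneg_eq_0_iff sum_nonneg)
  then show "M = 0\<^sub>m r c"
    using assms by (intro eq_matI) auto
qed (simp add: fro_sq_def)

lemma fro_sq_diff_orthogonal:
  assumes E: "E \<in> carrier_mat r c" and F: "F \<in> carrier_mat r c"
    and orth: "E * transpose_mat F = 0\<^sub>m r r"
  shows "fro_sq (E - F) = fro_sq E + fro_sq F"
proof -
  have "(\<Sum>i<r. \<Sum>j<c. E $$ (i,j) * F $$ (i,j)) = (\<Sum>i<r. (E * transpose_mat F) $$ (i,i))"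
    using E F by (intro sum.cong refl) (auto simp: scalar_prod_def atLeast0LessThan)
  also have "\<dots> = 0"
    using orth by simp
  finally have cross: "(\<Sum>i<r. \<Sum>j<c. E $$ (i,j) * F $$ (i,j)) = 0" .
  have "fro_sq (E - F) = fro_sq E + fro_sq F - 2 * (\<Sum>i<r. \<Sum>j<c. E $$ (i,j) * F $$ (i,j))"
    using E F unfolding fro_sq_def
    by (simp add: power2_diff sum.distrib sum_subtractf sum_distrib_left mult.assoc)
  with cross show ?thesis by simp
qed

lemma least_squares_pythagoras:
  fixes A B G D :: "real mat"
  assumes A: "A \<in> carrier_mat n m" and B: "B \<in> carrier_mat k m" and G: "G \<in> carrier_mat n n"
    and inv: "A * transpose_mat A * G = 1\<^sub>m n" and D: "D \<in> carrier_mat k n"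
  defines "D0 \<equiv> B * transpose_mat A * G"
  shows "fro_sq (B - D * A) = fro_sq (B - D0 * A) + fro_sq ((D - D0) * A)"
proof -
  have D0: "D0 \<in> carrier_mat k n"
    using A B G unfolding D0_def by auto
  have inv': "G * (A * transpose_mat A) = 1\<^sub>m n"
    using mat_mult_left_right_inverse[of "A * transpose_mat A" n G] A G inv by auto
  have "D0 * A * transpose_mat A = B * transpose_mat A * G * (A * transpose_mat A)"
    using A D0 unfolding D0_def[symmetric] by (simp add: assoc_mult_mat[of _ k n _ m _ n])
  also have "\<dots> = B * transpose_mat A * (G * (A * transpose_mat A))"
    using A B G by (intro assoc_mult_mat[of _ k n _ n _ n]) auto
  finally have "D0 * A * transpose_mat A = B * transpose_mat A"
    using A B unfolding inv' by simp
  then have normal_eq: "(B - D0 * A) * transpose_mat A = 0\<^sub>m k n"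
    using A B D0 by (intro eq_matI) (auto simp: minus_mult_distrib_mat[of _ k m])
  have "transpose_mat ((D - D0) * A) = transpose_mat A * transpose_mat (D - D0)"
    using A D D0 by (intro transpose_mult[of _ k n]) auto
  then have "(B - D0 * A) * transpose_mat ((D - D0) * A) = (B - D0 * A) * transpose_mat A * transpose_mat (D - D0)"
    using A B D D0 by (auto intro!: assoc_mult_mat[symmetric])
  also have "\<dots> = 0\<^sub>m k k"
    using D D0 unfolding normal_eq by simp
  finally have orth: "(B - D0 * A) * transpose_mat ((D - D0) * A) = 0\<^sub>m k k" .
  have "B - D * A = (B - D0 * A) - (D - D0) * A"
    using A B D D0 by (intro eq_matI) (auto simp: minus_mult_distrib_mat[of _ k n])
  moreover have "B - D0 * A \<in> carrier_mat k m" "(D - D0) * A \<in> carrier_mat k m"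
    using A B D D0 by (auto intro: minus_carrier_mat)
  ultimately show ?thesis
    using fro_sq_diff_orthogonal[OF _ _ orth] by simp
qed

lemma mult_right_invertible_eq_0:
  fixes C A R :: "'a :: comm_ring_1 mat"
  assumes C: "C \<in> carrier_mat k n" and A: "A \<in> carrier_mat n m" and R: "R \<in> carrier_mat m n"
    and AR: "A * R = 1\<^sub>m n" and CA: "C * A = 0\<^sub>m k m"
  shows "C = 0\<^sub>m k n"
proof -
  have "C = C * (A * R)"
    using C unfolding AR by simp
  also have "\<dots> = C * A * R"
    using A C R by (simp add: assoc_mult_mat[of C k n A m R n])
  finally show ?thesis
    using R unfolding CA by simp
qed

lemma least_squares_argmin_iff:
  fixes A B G D :: "real mat"
  assumes A: "A \<in> carrier_mat n m" and B: "B \<in> carrier_mat k m" and G: "G \<in> carrier_mat n n"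
    and inv: "A * transpose_mat A * G = 1\<^sub>m n"
  shows "(D \<in> carrier_mat k n \<and> (\<forall>D' \<in> carrier_mat k n. fro_sq (B - D * A) \<le> fro_sq (B - D' * A)))
    \<longleftrightarrow> D = B * transpose_mat A * G"
    (is "?min D \<longleftrightarrow> _")
proof -
  define D0 where "D0 = B * transpose_mat A * G"
  have D0: "D0 \<in> carrier_mat k n"
    using A B G unfolding D0_def by auto
  note pythagoras = least_squares_pythagoras[OF A B G inv, folded D0_def]
  show ?thesis
    unfolding D0_def[symmetric]
  proof
    assume min: "?min D"
    then have D: "D \<in> carrier_mat k n" by blast
    have DA: "(D - D0) * A \<in> carrier_mat k m"
      by (rule mult_carrier_mat[OF minus_carrier_mat[OF D0] A])
    have "fro_sq (B - D * A) \<le> fro_sq (B - D0 * A)"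
      using min D0 by blast
    then have "fro_sq ((D - D0) * A) = 0"
      using pythagoras[OF D] fro_sq_nonneg[of "(D - D0) * A"] by linarith
    then have "(D - D0) * A = 0\<^sub>m k m"
      using fro_sq_eq_0_iff[OF DA] by blast
    moreover have "A * (transpose_mat A * G) = 1\<^sub>m n"
      using A G inv by (metis assoc_mult_mat transpose_carrier_mat)
    ultimately have zero: "D - D0 = 0\<^sub>m k n"
      using A G by (intro mult_right_invertible_eq_0[OF minus_carrier_mat[OF D0] A]) auto
    have "D $$ (i,j) = D0 $$ (i,j)" if "i < k" "j < n" for i j
      using arg_cong[OF zero, of "\<lambda>M. M $$ (i,j)"] that D D0 by simp
    then show "D = D0"
      using D D0 by (intro eq_matI) auto
  next
    assume "D = D0"
    then show "?min D"
      using D0 pythagoras fro_sq_nonneg by (metis add_increasing2 order_refl)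
  qed
qed

lemma col_first_cols: "i < n \<Longrightarrow> col (first_cols n W) i = col W i"
  by (intro eq_vecI) (auto simp: first_cols_def col_def)

lemma row_proj_first_cols:
  assumes "i < n" "n \<le> dim_col W"
  shows "row (transpose_mat (first_cols n W) * Y) i = row (transpose_mat W * Y) i"
proof -
  have "row (transpose_mat (first_cols n W)) i = row (transpose_mat W) i"
    using assms col_first_cols[of i n W] by (simp add: row_transpose first_cols_def)
  then show ?thesis
    using assms by (intro eq_vecI) (auto simp: first_cols_def)
qed

lemma proj_gram_first_cols_entry:
  assumes "i < n" "j < n" "n \<le> dim_col W"
  shows "(transpose_mat (first_cols n W) * Y * transpose_mat (transpose_mat (first_cols n W) * Z)) $$ (i,j)
    = (transpose_mat W * Y * transpose_mat (transpose_mat W * Z)) $$ (i,j)"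
proof -
  have "(transpose_mat (first_cols n W) * Y * transpose_mat (transpose_mat (first_cols n W) * Z)) $$ (i,j)
      = row (transpose_mat (first_cols n W) * Y) i \<bullet> row (transpose_mat (first_cols n W) * Z) j"
    using assms by (simp add: first_cols_def)
  also have "\<dots> = row (transpose_mat W * Y) i \<bullet> row (transpose_mat W * Z) j"
    using assms by (simp add: row_proj_first_cols)
  also have "\<dots> = (transpose_mat W * Y * transpose_mat (transpose_mat W * Z)) $$ (i,j)"
    using assms by simp
  finally show ?thesis .
qed

lemma svd_proj_gram:
  assumes "is_svd X W S V"
  shows "transpose_mat W * X * transpose_mat (transpose_mat W * X) = S * transpose_mat S"
proof -
  let ?r = "dim_row X" and ?c = "dim_col X"
  from assms have W: "W \<in> carrier_mat ?r ?r" and V: "V \<in> carrier_mat ?c ?c"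
    and S: "S \<in> carrier_mat ?r ?c"
    and WW: "transpose_mat W * W = 1\<^sub>m ?r" and VV: "transpose_mat V * V = 1\<^sub>m ?c"
    and X: "X = W * S * transpose_mat V"
    unfolding is_svd_def by blast+
  have "transpose_mat W * (W * S) = transpose_mat W * W * S"
    using W S by (intro assoc_mult_mat[symmetric]) auto
  then have WWS: "transpose_mat W * (W * S) = S"
    using S unfolding WW by simp
  have "transpose_mat W * X = transpose_mat W * (W * S) * transpose_mat V"
    unfolding X using W S V by (intro assoc_mult_mat[symmetric, of _ ?r ?r _ ?c _ ?c]) auto
  then have WX: "transpose_mat W * X = S * transpose_mat V"
    unfolding WWS .
  have "transpose_mat (S * transpose_mat V) = V * transpose_mat S"
    using S V transpose_mult[of S ?r ?c "transpose_mat V" ?c] by simp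
  then have "S * transpose_mat V * transpose_mat (S * transpose_mat V) = S * (transpose_mat V * V) * transpose_mat S"
    using S V by (simp add: assoc_mult_mat[of S ?r ?c _ ?c _ ?c] assoc_mult_mat[of S ?r ?c _ ?c _ ?r]
        assoc_mult_mat[of "transpose_mat V" ?c ?c V ?c _ ?r])
  then show ?thesis
    using S unfolding WX VV by simp
qed

lemma svd_proj_first_cols_gram:
  assumes svd: "is_svd X W S V" and n: "n \<le> min (dim_row X) (dim_col X)"
  shows "transpose_mat (first_cols n W) * X * transpose_mat (transpose_mat (first_cols n W) * X)
    = mat_diag n (\<lambda>j. (S $$ (j,j))^2)"
proof (rule eq_matI)
  from svd have W: "W \<in> carrier_mat (dim_row X) (dim_row X)"
    and S: "S \<in> carrier_mat (dim_row X) (dim_col X)"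
    and S_diag: "\<forall>i<dim_row X. \<forall>j<dim_col X. i \<noteq> j \<longrightarrow> S $$ (i,j) = 0"
    unfolding is_svd_def by blast+
  fix i j assume "i < dim_row (mat_diag n (\<lambda>j. (S $$ (j,j))^2))" "j < dim_col (mat_diag n (\<lambda>j. (S $$ (j,j))^2))"
  then have ij: "i < n" "j < n" by (simp_all add: mat_diag_def)
  have "(transpose_mat (first_cols n W) * X * transpose_mat (transpose_mat (first_cols n W) * X)) $$ (i,j)
      = (S * transpose_mat S) $$ (i,j)"
    using ij n W by (simp add: proj_gram_first_cols_entry svd_proj_gram[OF svd])
  also have "\<dots> = (\<Sum>l<dim_col X. S $$ (i,l) * S $$ (j,l))"
    using ij n S by (simp add: scalar_prod_def atLeast0LessThan)
  also have "\<dots> = (\<Sum>l<dim_col X. if l = i then S $$ (i,i) * S $$ (j,i) else 0)"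
    using ij n S_diag by (intro sum.cong) auto
  also have "\<dots> = mat_diag n (\<lambda>j. (S $$ (j,j))^2) $$ (i,j)"
    using ij n S_diag by (auto simp: mat_diag_def power2_eq_square)
  finally show "(transpose_mat (first_cols n W) * X * transpose_mat (transpose_mat (first_cols n W) * X)) $$ (i,j)
      = mat_diag n (\<lambda>j. (S $$ (j,j))^2) $$ (i,j)" .
qed (simp_all add: first_cols_def mat_diag_def)

lemma opinf_min_iff:
  fixes U X Xt G :: "real mat"
  assumes U: "U \<in> carrier_mat N n" and X: "X \<in> carrier_mat N m" and Xt: "Xt \<in> carrier_mat N m"
    and G: "G \<in> carrier_mat n n"
    and inv: "transpose_mat U * X * transpose_mat (transpose_mat U * X) * G = 1\<^sub>m n"
  shows "opinf_min U X Xt D \<longleftrightarrow> D = transpose_mat U * Xt * transpose_mat (transpose_mat U * X) * G"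
proof -
  have "transpose_mat U * X \<in> carrier_mat n m" "transpose_mat U * Xt \<in> carrier_mat n m"
    using U X Xt by auto
  from least_squares_argmin_iff[OF this(1,2) G inv] show ?thesis
    using U unfolding opinf_min_def by simp
qed

lemma opinf_min_svd_iff:
  fixes X Xt W S V :: "real mat"
  assumes svd: "is_svd X W S V" and Xt: "Xt \<in> carrier_mat (dim_row X) (dim_col X)"
    and m: "m \<le> min (dim_row X) (dim_col X)" and nz: "\<forall>j<m. S $$ (j,j) \<noteq> 0"
  shows "opinf_min (first_cols m W) X Xt D \<longleftrightarrow>
    D = transpose_mat (first_cols m W) * Xt * transpose_mat (transpose_mat (first_cols m W) * X)
      * mat_diag m (\<lambda>j. 1 / (S $$ (j,j))^2)"
proof (rule opinf_min_iff)
  have "W \<in> carrier_mat (dim_row X) (dim_row X)"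
    using svd unfolding is_svd_def by blast
  then show "first_cols m W \<in> carrier_mat (dim_row X) m"
    by (simp add: first_cols_def)
  have "mat_diag m (\<lambda>j. (S $$ (j,j))^2) * mat_diag m (\<lambda>j. 1 / (S $$ (j,j))^2) = mat_diag m (\<lambda>_. 1)"
    using nz unfolding mat_diag_diag by (intro eq_matI) (auto simp: mat_diag_def)
  then show "transpose_mat (first_cols m W) * X * transpose_mat (transpose_mat (first_cols m W) * X)
      * mat_diag m (\<lambda>j. 1 / (S $$ (j,j))^2) = 1\<^sub>m m"
    unfolding svd_proj_first_cols_gram[OF svd m] by simp
qed (use Xt in auto)

lemma first_cols_first_cols: "k \<le> n \<Longrightarrow> first_cols k (first_cols n W) = first_cols k W"
  by (intro eq_matI) (auto simp: first_cols_def)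

lemma lead_block_proj_solution:
  assumes "k \<le> m" "m \<le> dim_col W"
  shows "lead_block k (transpose_mat (first_cols m W) * Y * transpose_mat (transpose_mat (first_cols m W) * Z)
      * mat_diag m f)
    = transpose_mat (first_cols k W) * Y * transpose_mat (transpose_mat (first_cols k W) * Z) * mat_diag k f"
proof -
  define P where "P l = transpose_mat (first_cols l W) * Y * transpose_mat (transpose_mat (first_cols l W) * Z)"
    for l
  have P: "P l \<in> carrier_mat l l" for l
    unfolding P_def by (intro carrier_matI) (simp_all add: first_cols_def)
  have entry: "(P l * mat_diag l f) $$ (i,j) = (transpose_mat W * Y * transpose_mat (transpose_mat W * Z)) $$ (i,j) * f j"
    if "i < l" "j < l" "l \<le> dim_col W" for l i j
    using that P[of l] unfolding P_def
    by (simp add: mat_diag_mult_right proj_gram_first_cols_entry del: index_mult_mat)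
  have "lead_block k (P m * mat_diag m f) = P k * mat_diag k f"
    using assms carrier_matD[OF mult_carrier_mat[OF P mat_diag_dim], of k f]
    by (intro eq_matI) (auto simp: lead_block_def entry simp del: index_mult_mat)
  then show ?thesis
    unfolding P_def .
qed

theorem proposition1:
  fixes X Xt W S V :: "real mat" and n N ns :: nat
  assumes X: "X \<in> carrier_mat N ns"
    and Xt: "Xt \<in> carrier_mat N ns"
    and svd: "is_svd X W S V"
    and n: "n \<le> min N ns"
    and nz: "\<forall>j<n. S $$ (j,j) \<noteq> 0"
  defines "U \<equiv> first_cols n W"
    and "Xh \<equiv> transpose_mat (first_cols n W) * X"
    and "Xth \<equiv> transpose_mat (first_cols n W) * Xt"
    and "Sigma_inv2 \<equiv> mat_diag n (\<lambda>j. 1 / (S $$ (j,j))^2)"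
  shows "(\<forall>D. opinf_min U X Xt D \<longleftrightarrow> D = Xth * transpose_mat Xh * Sigma_inv2)
     \<and> (\<forall>n' < n. \<forall>D. opinf_min (first_cols n' U) X Xt D \<longleftrightarrow>
           D = lead_block n' (Xth * transpose_mat Xh * Sigma_inv2))"
proof -
  have W: "W \<in> carrier_mat N N"
    using svd X unfolding is_svd_def by (metis carrier_matD(1))
  have solution: "opinf_min (first_cols m W) X Xt D \<longleftrightarrow>
      D = transpose_mat (first_cols m W) * Xt * transpose_mat (transpose_mat (first_cols m W) * X)
        * mat_diag m (\<lambda>j. 1 / (S $$ (j,j))^2)"
    if "m \<le> n" for m D
    using opinf_min_svd_iff[OF svd] X Xt n nz that by simp
  show ?thesis
    unfolding U_def Xh_def Xth_def Sigma_inv2_def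
  proof (intro conjI allI impI)
    fix n' D assume "n' < n"
    with n W show "opinf_min (first_cols n' (first_cols n W)) X Xt D \<longleftrightarrow>
        D = lead_block n' (transpose_mat (first_cols n W) * Xt
          * transpose_mat (transpose_mat (first_cols n W) * X) * mat_diag n (\<lambda>j. 1 / (S $$ (j,j))^2))"
      by (simp add: first_cols_first_cols lead_block_proj_solution solution)
  qed (simp add: solution)
qed

end
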